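(* Let $M:[0,1]\to\mathbb{R}^d$ be a continuous martingale with $M_0=0$, let $D$ be a partition of $[0,1]$ and $M^D$ the Hoff process of $M$. If $\delta\ge|D|$ then \[ \sup_{|t-s|\le\delta}|M^D_{s,t}|\le 3\sup_{|t-s|\le2\delta}|M_{s,t}|. \]
   Context: A partition $D=(t_i)_{i=0}^n$ of $[0,1]$ satisfies $0=t_0<\dots<t_n=1$, mesh $|D|=\max_i|t_{i+1}-t_i|$, $t_i^*=\tfrac12(t_i+t_{i+1})$. The Hoff process of a continuous path $x:[0,1]\to\mathbb{R}^d$ with $x_0=0$ is the piecewise-linear path $x^D=(x^{D,b},x^{D,f}):[0,1]\to\mathbb{R}^{2d}$ given by: $x^D_u=(x_{t_{i-1}}+\frac{u-t_i}{t_i^*-t_i}(x_{t_i}-x_{t_{i-1}});\,x_{t_{i+1}})$ for $u\in[t_i,t_i^* )$, $i=1,\dots,n-1$; $x^D_u=(x_{t_i};\,x_{t_{i+1}}+\frac{u-t_i^*}{t_{i+1}-t_i^*}(x_{t_{i+2}}-x_{t_{i+1}}))$ for $u\in[t_i^*,t_{i+1})$, $i=0,\dots,n-2$; $x^D_u=(0;\,\frac{u}{t_0^*}x_{t_1})$ for $u\in[0,t_0^* )$; $x^D_u=(x_{t_{n-1}}+\frac{u-t_{n-1}^*}{t_n-t_{n-1}^*}(x_{t_n}-x_{t_{n-1}});\,x_{t_n})$ for $u\in[t_{n-1}^*,1]$. Increments $x_{s,t}=x_t-x_s$; suprema are over $s,t\in[0,1]$. *)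

theory Defs
  imports "HOL-Probability.Probability"
begin

definition is_partition :: "(nat \<Rightarrow> real) \<Rightarrow> nat \<Rightarrow> bool" where
  "is_partition t n \<longleftrightarrow> n \<ge> 1 \<and> t 0 = 0 \<and> t n = 1 \<and> (\<forall>i<n. t i < t (Suc i))"

definition mesh :: "(nat \<Rightarrow> real) \<Rightarrow> nat \<Rightarrow> real" where
  "mesh t n = Max ((\<lambda>i. t (Suc i) - t i) ` {..<n})"

definition midpt :: "(nat \<Rightarrow> real) \<Rightarrow> nat \<Rightarrow> real" where
  "midpt t i = (t i + t (Suc i)) / 2"

text \<open>Index of the partition interval \<open>[t i, t (i+1))\<close> containing \<open>u\<close> (last one for \<open>u = 1\<close>).\<close>
definition part_index :: "(nat \<Rightarrow> real) \<Rightarrow> nat \<Rightarrow> real \<Rightarrow> nat" where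
  "part_index t n u = (GREATEST i. i < n \<and> t i \<le> u)"

definition hoff :: "(real \<Rightarrow> 'b::real_vector) \<Rightarrow> (nat \<Rightarrow> real) \<Rightarrow> nat \<Rightarrow> real \<Rightarrow> 'b \<times> 'b" where
  "hoff x t n u =
    (let i = part_index t n u in
     if u < midpt t i then
       (if i = 0 then (0, (u / midpt t 0) *\<^sub>R x (t 1))
        else (x (t (i - 1)) + ((u - t i) / (midpt t i - t i)) *\<^sub>R (x (t i) - x (t (i - 1))),
              x (t (Suc i))))
     else
       (if i + 1 < n then
          (x (t i), x (t (Suc i)) + ((u - midpt t i) / (t (Suc i) - midpt t i)) *\<^sub>R
                        (x (t (Suc (Suc i))) - x (t (Suc i))))
        else (x (t (n - 1)) + ((u - midpt t (n - 1)) / (t n - midpt t (n - 1))) *\<^sub>R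
                        (x (t n) - x (t (n - 1))), x (t n))))"

definition cont_martingale ::
  "'a measure \<Rightarrow> (real \<Rightarrow> 'a measure) \<Rightarrow> (real \<Rightarrow> 'a \<Rightarrow> real ^ 'd) \<Rightarrow> bool" where
  "cont_martingale P F X \<longleftrightarrow>
     prob_space P \<and>
     (\<forall>t\<in>{0..1}. subalgebra P (F t)) \<and>
     (\<forall>s t. 0 \<le> s \<longrightarrow> s \<le> t \<longrightarrow> t \<le> 1 \<longrightarrow> subalgebra (F t) (F s)) \<and>
     (\<forall>t\<in>{0..1}. \<forall>i. (\<lambda>\<omega>. X t \<omega> $ i) \<in> borel_measurable (F t) \<and> integrable P (\<lambda>\<omega>. X t \<omega> $ i)) \<and>
     (\<forall>s t. 0 \<le> s \<longrightarrow> s \<le> t \<longrightarrow> t \<le> 1 \<longrightarrow> (\<forall>i.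
        AE \<omega> in P. real_cond_exp P (F s) (\<lambda>\<omega>. X t \<omega> $ i) \<omega> = X s \<omega> $ i)) \<and>
     (\<forall>\<omega>\<in>space P. continuous_on {0..1} (\<lambda>t. X t \<omega>))"

end

theory Submission
  imports Defs
begin

text \<open>Both components of the Hoff process at time \<open>u\<close> lie on a chord of the path between two times
  within \<open>3/2 |D|\<close> of \<open>u\<close>. For \<open>|u - s| \<le> \<delta>\<close> all these times are within \<open>2\<delta>\<close> of the midpoint
  \<open>\<tau> = (s + u)/2\<close>, so by convexity of balls every component at \<open>s\<close> and at \<open>u\<close> lies in the ball of
  radius \<open>W = sup_{|b - a| \<le> 2\<delta>} |x_{a,b}|\<close> around \<open>x \<tau>\<close>. Each component of the increment is
  therefore at most \<open>2W\<close>, and the increment of the pair at most \<open>2\<surd>2 W \<le> 3W\<close>.\<close>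

lemma partition_strict_mono:
  assumes "is_partition t n" "i < j" "j \<le> n"
  shows "t i < t j"
  using assms(2,3)
proof (induction j)
  case 0
  then show ?case by simp
next
  case (Suc j)
  have "t j < t (Suc j)" using assms(1) Suc.prems unfolding is_partition_def by auto
  then show ?case using Suc by (cases "i = j") auto
qed

lemma partition_mono:
  assumes "is_partition t n" "i \<le> j" "j \<le> n"
  shows "t i \<le> t j"
  using partition_strict_mono[OF assms(1)] assms(2,3) by (cases "i = j") (auto intro: less_imp_le)

lemma partition_in_unit:
  assumes "is_partition t n" "i \<le> n"
  shows "t i \<in> {0..1}"
  using partition_mono[OF assms(1), of 0 i] partition_mono[OF assms(1), of i n] assms
  unfolding is_partition_def by auto

lemma partition_step_le_mesh:
  assumes "i < n"
  shows "t (Suc i) - t i \<le> mesh t n"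
  unfolding mesh_def by (rule Max_ge) (use assms in auto)

lemma mesh_nonneg:
  assumes "is_partition t n"
  shows "0 \<le> mesh t n"
  using partition_step_le_mesh[of 0 n t] assms unfolding is_partition_def by force

lemma part_index_bounds:
  assumes p: "is_partition t n" and u: "u \<in> {0..1}"
  defines "i \<equiv> part_index t n u"
  shows "i < n" "t i \<le> u" "u \<le> t (Suc i)" "Suc i < n \<Longrightarrow> u < t (Suc i)"
proof -
  let ?P = "\<lambda>i. i < n \<and> t i \<le> u"
  have P0: "?P 0" using p u unfolding is_partition_def by auto
  have bounded: "\<And>j. ?P j \<Longrightarrow> j \<le> n" by auto
  have Pi: "?P i" unfolding i_def part_index_def using GreatestI_nat[of ?P 0 n, OF P0 bounded] .
  then show "i < n" "t i \<le> u" by auto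
  show below_next: "u < t (Suc i)" if "Suc i < n"
  proof (rule ccontr)
    assume "\<not> u < t (Suc i)"
    then have "Suc i \<le> Greatest ?P" using that Greatest_le_nat[of ?P "Suc i" n] bounded by auto
    then show False unfolding i_def part_index_def by simp
  qed
  show "u \<le> t (Suc i)"
  proof (cases "Suc i < n")
    case True
    then show ?thesis using below_next by simp
  next
    case False
    then have "Suc i = n" using Pi by auto
    then show ?thesis using p u unfolding is_partition_def by auto
  qed
qed

definition on_nearby_chord :: "(real \<Rightarrow> 'b::real_vector) \<Rightarrow> real \<Rightarrow> real \<Rightarrow> 'b \<Rightarrow> bool" where
  "on_nearby_chord x r u y \<longleftrightarrow>
     (\<exists>a\<in>{0..1}. \<exists>b\<in>{0..1}. \<bar>a - u\<bar> \<le> r \<and> \<bar>b - u\<bar> \<le> r \<and> y \<in> closed_segment (x a) (x b))"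

lemma on_nearby_chordI:
  assumes "a \<in> {0..1}" "b \<in> {0..1}" "\<bar>a - u\<bar> \<le> r" "\<bar>b - u\<bar> \<le> r" "0 \<le> l" "l \<le> 1"
  shows "on_nearby_chord x r u (x a + l *\<^sub>R (x b - x a))"
proof -
  have "x a + l *\<^sub>R (x b - x a) = (1 - l) *\<^sub>R x a + l *\<^sub>R x b" by (simp add: algebra_simps)
  then show ?thesis using assms unfolding on_nearby_chord_def in_segment by blast
qed

lemma on_nearby_chord_point:
  assumes "a \<in> {0..1}" "\<bar>a - u\<bar> \<le> r"
  shows "on_nearby_chord x r u (x a)"
  using on_nearby_chordI[OF assms(1) assms(1) assms(2) assms(2), of 0 x] by simp

lemma on_nearby_chord_dist_le:
  fixes x :: "real \<Rightarrow> 'b::real_normed_vector"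
  assumes y: "on_nearby_chord x r u y"
    and W: "\<And>a. a \<in> {0..1} \<Longrightarrow> \<bar>a - \<tau>\<bar> \<le> c \<Longrightarrow> norm (x a - x \<tau>) \<le> W"
    and c: "\<bar>u - \<tau>\<bar> + r \<le> c"
  shows "norm (y - x \<tau>) \<le> W"
proof -
  obtain a b where ab: "a \<in> {0..1}" "b \<in> {0..1}" "\<bar>a - u\<bar> \<le> r" "\<bar>b - u\<bar> \<le> r"
    and seg: "y \<in> closed_segment (x a) (x b)"
    using y unfolding on_nearby_chord_def by blast
  have "x a \<in> cball (x \<tau>) W" "x b \<in> cball (x \<tau>) W"
    using W[of a] W[of b] ab c by (auto simp: dist_norm norm_minus_commute)
  then have "y \<in> cball (x \<tau>) W" using seg closed_segment_subset[OF _ _ convex_cball] by blast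
  then show ?thesis by (simp add: dist_norm norm_minus_commute)
qed

lemma norm_Pair_le_3:
  assumes "norm a \<le> 2 * W" "norm c \<le> 2 * W"
  shows "norm (a, c) \<le> 3 * W"
proof -
  have "0 \<le> W" using assms(1) norm_ge_zero[of a] by linarith
  have "(norm a)\<^sup>2 \<le> (2 * W)\<^sup>2" "(norm c)\<^sup>2 \<le> (2 * W)\<^sup>2"
    using power_mono[OF assms(1) norm_ge_zero, of 2] power_mono[OF assms(2) norm_ge_zero, of 2] .
  then have "(norm a)\<^sup>2 + (norm c)\<^sup>2 \<le> (3 * W)\<^sup>2"
    by (simp add: power_mult_distrib) (use zero_le_power2[of W] in linarith)
  then have "norm (a, c) \<le> sqrt ((3 * W)\<^sup>2)"
    unfolding norm_Pair by (rule real_sqrt_le_mono)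
  also have "\<dots> = 3 * W" using \<open>0 \<le> W\<close> by (subst real_sqrt_abs) simp
  finally show ?thesis .
qed

context
  fixes t :: "nat \<Rightarrow> real" and n :: nat
  assumes partition: "is_partition t n"
begin

lemma hoff_first_half_on_nearby_chords:
  fixes x :: "real \<Rightarrow> 'b::real_vector"
  assumes u: "u \<in> {0..1}" and x0: "x 0 = 0" and half: "u < midpt t (part_index t n u)"
  defines "r \<equiv> 3/2 * mesh t n"
  shows "on_nearby_chord x r u (fst (hoff x t n u)) \<and> on_nearby_chord x r u (snd (hoff x t n u))"
proof -
  define i where "i = part_index t n u"
  note idx = part_index_bounds[OF partition u, folded i_def]
  have step: "t (Suc i) - t i \<le> mesh t n" using partition_step_le_mesh idx(1) .
  have lt: "t i < t (Suc i)" using partition idx(1) unfolding is_partition_def by auto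
  have mid: "midpt t i = (t i + t (Suc i)) / 2" unfolding midpt_def ..
  have next_near: "on_nearby_chord x r u (x (t (Suc i)))"
    using idx step partition_in_unit[OF partition, of "Suc i"] unfolding r_def
    by (intro on_nearby_chord_point) auto
  show ?thesis
  proof (cases "i = 0")
    case True
    have t0: "t 0 = 0" using partition unfolding is_partition_def by simp
    have "hoff x t n u = (x (t 0), x (t 0) + (u / midpt t 0) *\<^sub>R (x (t 1) - x (t 0)))"
      using half True t0 x0 unfolding hoff_def Let_def i_def[symmetric] by simp
    moreover have "on_nearby_chord x r u (x (t 0))"
      using True u step idx t0 unfolding r_def by (intro on_nearby_chord_point) auto
    moreover have "on_nearby_chord x r u (x (t 0) + (u / midpt t 0) *\<^sub>R (x (t 1) - x (t 0)))"
      using True half u step idx t0 mid lt partition_in_unit[OF partition, of 1]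
      unfolding r_def i_def[symmetric] by (intro on_nearby_chordI) (auto simp: field_simps)
    ultimately show ?thesis by simp
  next
    case False
    have prev_step: "t i - t (i - 1) \<le> mesh t n"
      using partition_step_le_mesh[of "i - 1" n t] False idx(1) by simp
    have "hoff x t n u = (x (t (i - 1)) + ((u - t i) / (midpt t i - t i)) *\<^sub>R (x (t i) - x (t (i - 1))),
                          x (t (Suc i)))"
      using half False unfolding hoff_def Let_def i_def[symmetric] by simp
    moreover have "on_nearby_chord x r u
        (x (t (i - 1)) + ((u - t i) / (midpt t i - t i)) *\<^sub>R (x (t i) - x (t (i - 1))))"
      using half idx step prev_step mid lt partition_in_unit[OF partition, of i]
        partition_in_unit[OF partition, of "i - 1"] partition_mono[OF partition, of "i - 1" i]
      unfolding r_def i_def[symmetric] by (intro on_nearby_chordI) (auto simp: field_simps)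
    ultimately show ?thesis using next_near by simp
  qed
qed

lemma hoff_second_half_on_nearby_chords:
  fixes x :: "real \<Rightarrow> 'b::real_vector"
  assumes u: "u \<in> {0..1}" and half: "\<not> u < midpt t (part_index t n u)"
  defines "r \<equiv> 3/2 * mesh t n"
  shows "on_nearby_chord x r u (fst (hoff x t n u)) \<and> on_nearby_chord x r u (snd (hoff x t n u))"
proof -
  define i where "i = part_index t n u"
  note idx = part_index_bounds[OF partition u, folded i_def]
  have step: "t (Suc i) - t i \<le> mesh t n" using partition_step_le_mesh idx(1) .
  have lt: "t i < t (Suc i)" using partition idx(1) unfolding is_partition_def by auto
  have mid: "midpt t i = (t i + t (Suc i)) / 2" unfolding midpt_def ..
  have this_near: "on_nearby_chord x r u (x (t i))"
    using idx step half mid partition_in_unit[OF partition, of i] unfolding r_def i_def[symmetric]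
    by (intro on_nearby_chord_point) auto
  show ?thesis
  proof (cases "Suc i < n")
    case True
    have next_step: "t (Suc (Suc i)) - t (Suc i) \<le> mesh t n"
      using partition_step_le_mesh True .
    have "hoff x t n u = (x (t i), x (t (Suc i)) + ((u - midpt t i) / (t (Suc i) - midpt t i)) *\<^sub>R
                                   (x (t (Suc (Suc i))) - x (t (Suc i))))"
      using half True unfolding hoff_def Let_def i_def[symmetric] by simp
    moreover have "on_nearby_chord x r u (x (t (Suc i)) + ((u - midpt t i) / (t (Suc i) - midpt t i)) *\<^sub>R
                                   (x (t (Suc (Suc i))) - x (t (Suc i))))"
      using half idx True step next_step mid lt partition_in_unit[OF partition, of "Suc i"]
        partition_in_unit[OF partition, of "Suc (Suc i)"]
        partition_strict_mono[OF partition, of "Suc i" "Suc (Suc i)"]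
      unfolding r_def i_def[symmetric] by (intro on_nearby_chordI) (auto simp: field_simps)
    ultimately show ?thesis using this_near by simp
  next
    case False
    then have last: "i = n - 1" "Suc i = n" using idx(1) by auto
    have "hoff x t n u = (x (t i) + ((u - midpt t i) / (t (Suc i) - midpt t i)) *\<^sub>R
                                   (x (t (Suc i)) - x (t i)), x (t (Suc i)))"
      using half False last unfolding hoff_def Let_def i_def[symmetric] by simp
    moreover have "on_nearby_chord x r u (x (t i) + ((u - midpt t i) / (t (Suc i) - midpt t i)) *\<^sub>R
                                   (x (t (Suc i)) - x (t i)))"
      using half idx step mid lt partition_in_unit[OF partition, of i]
        partition_in_unit[OF partition, of "Suc i"]
      unfolding r_def i_def[symmetric] by (intro on_nearby_chordI) (auto simp: field_simps)
    moreover have "on_nearby_chord x r u (x (t (Suc i)))"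
      using idx step partition_in_unit[OF partition, of "Suc i"] unfolding r_def
      by (intro on_nearby_chord_point) auto
    ultimately show ?thesis by simp
  qed
qed

lemma hoff_on_nearby_chords:
  fixes x :: "real \<Rightarrow> 'b::real_vector"
  assumes "u \<in> {0..1}" "x 0 = 0"
  shows "on_nearby_chord x (3/2 * mesh t n) u (fst (hoff x t n u))"
    and "on_nearby_chord x (3/2 * mesh t n) u (snd (hoff x t n u))"
  using hoff_first_half_on_nearby_chords[of u x, OF assms] hoff_second_half_on_nearby_chords[of u x, OF assms(1)]
  by (cases "u < midpt t (part_index t n u)"; simp)+

lemma norm_hoff_increment_le:
  fixes x :: "real \<Rightarrow> 'b::real_normed_vector"
  assumes x0: "x 0 = 0" and mesh: "mesh t n \<le> \<delta>"
    and su: "s \<in> {0..1}" "u \<in> {0..1}" "\<bar>u - s\<bar> \<le> \<delta>"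
    and W: "\<And>a b. a \<in> {0..1} \<Longrightarrow> b \<in> {0..1} \<Longrightarrow> \<bar>b - a\<bar> \<le> 2 * \<delta> \<Longrightarrow> norm (x b - x a) \<le> W"
  shows "norm (hoff x t n u - hoff x t n s) \<le> 3 * W"
proof -
  define \<tau> where "\<tau> = (s + u) / 2"
  have \<tau>: "\<tau> \<in> {0..1}" using su unfolding \<tau>_def by auto
  have W\<tau>: "norm (x a - x \<tau>) \<le> W" if "a \<in> {0..1}" "\<bar>a - \<tau>\<bar> \<le> 2 * \<delta>" for a
    using W[OF \<tau> that(1)] that(2) by (simp add: abs_minus_commute)
  have near_u: "\<bar>u - \<tau>\<bar> + 3/2 * mesh t n \<le> 2 * \<delta>" and near_s: "\<bar>s - \<tau>\<bar> + 3/2 * mesh t n \<le> 2 * \<delta>"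
    using su mesh unfolding \<tau>_def by (auto simp: abs_if field_simps split: if_splits)
  have component_bound: "norm (f (hoff x t n u) - f (hoff x t n s)) \<le> 2 * W"
    if "\<And>v. v \<in> {0..1} \<Longrightarrow> on_nearby_chord x (3/2 * mesh t n) v (f (hoff x t n v))"
    for f :: "'b \<times> 'b \<Rightarrow> 'b"
  proof -
    have "norm (f (hoff x t n u) - x \<tau>) \<le> W" "norm (f (hoff x t n s) - x \<tau>) \<le> W"
      using on_nearby_chord_dist_le[OF that W\<tau>] su near_u near_s by auto
    then show ?thesis
      using norm_triangle_ineq4[of "f (hoff x t n u) - x \<tau>" "f (hoff x t n s) - x \<tau>"] by simp
  qed
  have "norm (fst (hoff x t n u) - fst (hoff x t n s)) \<le> 2 * W"
    "norm (snd (hoff x t n u) - snd (hoff x t n s)) \<le> 2 * W"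
    using component_bound hoff_on_nearby_chords x0 by blast+
  then have "norm (fst (hoff x t n u) - fst (hoff x t n s), snd (hoff x t n u) - snd (hoff x t n s)) \<le> 3 * W"
    by (rule norm_Pair_le_3)
  then show ?thesis by (simp add: minus_prod_def)
qed

end

lemma bdd_above_increments:
  fixes x :: "real \<Rightarrow> 'b::real_normed_vector"
  assumes "continuous_on {0..1} x"
  shows "bdd_above ((\<lambda>(s, u). norm (x u - x s)) ` {(s, u). s \<in> {0..1} \<and> u \<in> {0..1} \<and> P s u})"
proof -
  have "compact (x ` {0..1})" using compact_continuous_image[OF assms] by simp
  then obtain B where B: "\<And>r. r \<in> {0..1} \<Longrightarrow> norm (x r) \<le> B"
    using compact_imp_bounded bounded_iff by (metis image_eqI)
  have "norm (x u - x s) \<le> 2 * B" if "s \<in> {0..1}" "u \<in> {0..1}" for s u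
    using norm_triangle_ineq4[of "x u" "x s"] B[OF that(1)] B[OF that(2)] by simp
  then show ?thesis by (intro bdd_aboveI2[of _ _ "2 * B"]) auto
qed

lemma hoff_modulus_le:
  fixes x :: "real \<Rightarrow> 'b::real_normed_vector"
  assumes cont: "continuous_on {0..1} x" and x0: "x 0 = 0"
    and p: "is_partition t n" and mesh: "mesh t n \<le> \<delta>"
  shows "(SUP (s, u) \<in> {(s, u). s \<in> {0..1} \<and> u \<in> {0..1} \<and> \<bar>u - s\<bar> \<le> \<delta>}.
            norm (hoff x t n u - hoff x t n s))
         \<le> 3 * (SUP (s, u) \<in> {(s, u). s \<in> {0..1} \<and> u \<in> {0..1} \<and> \<bar>u - s\<bar> \<le> 2 * \<delta>}.
            norm (x u - x s))" (is "Sup (_ ` ?S1) \<le> 3 * ?W")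
proof (rule cSUP_least)
  show "?S1 \<noteq> {}" using mesh_nonneg[OF p] mesh by (auto intro!: exI[of _ 0])
next
  have W: "norm (x b - x a) \<le> ?W" if "a \<in> {0..1}" "b \<in> {0..1}" "\<bar>b - a\<bar> \<le> 2 * \<delta>" for a b
    using cSUP_upper[OF _ bdd_above_increments[OF cont], of "(a, b)"] that by auto
  fix z assume "z \<in> ?S1"
  then show "(case z of (s, u) \<Rightarrow> norm (hoff x t n u - hoff x t n s)) \<le> 3 * ?W"
    using norm_hoff_increment_le[of t n x, OF p x0 mesh _ _ _ W] by auto
qed

theorem mainTheorem13:
  fixes P :: "'a measure" and F :: "real \<Rightarrow> 'a measure"
    and M :: "real \<Rightarrow> 'a \<Rightarrow> real ^ 'd"
    and t :: "nat \<Rightarrow> real" and n :: nat and \<delta> :: real and \<omega> :: 'a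
  assumes "cont_martingale P F M"
    and "\<forall>\<omega>\<in>space P. M 0 \<omega> = 0"
    and "is_partition t n"
    and "\<delta> \<ge> mesh t n"
    and "\<omega> \<in> space P"
  shows "(SUP (s, u) \<in> {(s, u). s \<in> {0..1} \<and> u \<in> {0..1} \<and> \<bar>u - s\<bar> \<le> \<delta>}.
            norm (hoff (\<lambda>r. M r \<omega>) t n u - hoff (\<lambda>r. M r \<omega>) t n s))
         \<le> 3 * (SUP (s, u) \<in> {(s, u). s \<in> {0..1} \<and> u \<in> {0..1} \<and> \<bar>u - s\<bar> \<le> 2 * \<delta>}.
            norm (M u \<omega> - M s \<omega>))"
proof (rule hoff_modulus_le)
  show "continuous_on {0..1} (\<lambda>r. M r \<omega>)"
    using assms(1,5) unfolding cont_martingale_def by auto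
  show "M 0 \<omega> = 0" using assms(2,5) by auto
qed (use assms(3,4) in auto)

end
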